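(* There is no $\alpha\ge1$ such that $(\overline{\chi_f})_\alpha\in\Delta(\mathcal{A},\le)$; that is, the fractional clique cover number $\overline{\chi_f}$ does not extend to an element of $\Delta(\mathcal{A},\le)$.
   Context: The fractional clique cover number is $\overline{\chi_f}(G)=\chi_f(\overline{G})$, the fractional chromatic number of the complement; it belongs to $\Delta(\mathcal{G},\le)$. Graphs are finite simple undirected; $x\simeq x'$ means equal or adjacent. Strong product $G\boxtimes H$: vertex set $V(G)\times V(H)$, $(g,h)\simeq(g',h')$ iff $g\simeq g'$ and $h\simeq h'$. $H\le G$ for graphs means there is a homomorphism from $\overline{H}$ to $\overline{G}$. $\Delta(\mathcal{G},\le)$ is the set of maps $f$ from graphs to $\mathbb{R}_{\ge0}$ with $f(\text{empty})=0$, $f(K_1)=1$, additive under disjoint union, multiplicative under $\boxtimes$, and monotone under $\le$. A noncommutative graph is a subspace $S\subseteq B(\mathcal{H})$ ($\mathcal{H}$ finite-dimensional) with $I\in S$, $S^*=S$. A cohomomorphism from $T\subseteq B(\mathcal{K})$ to $S\subseteq B(\mathcal{H})$ is a finite family of linear maps $E_i:\mathcal{K}\to\mathcal{H}$ with $\sum_iE_i^*E_i=I$ and $E_i^*SE_j\subseteq T$ for all $i,j$; $T\le S$ if one exists. $\widehat{G}=\operatorname{span}\{|x\rangle\langle x'|:x\simeq x'\}\subseteq B(\mathbb{C}^{V(G)})$, $\mathcal{C}_d=\mathbb{C}I\subseteq B(\mathbb{C}^d)$. $\mathcal{A}$ is the semiring (under $\oplus,\otimes$, up to unitary isomorphism)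 generated by all $\widehat{G}$ and $\mathcal{C}_d$; its elements have the form $\bigoplus_{d=1}^r\widehat{G_d}\otimes\mathcal{C}_d$. For $f\in\Delta(\mathcal{G},\le)$, $\alpha\ge1$, $f_\alpha(\bigoplus_{d}\widehat{G_d}\otimes\mathcal{C}_d)=\sum_d f(G_d)d^\alpha$. $\Delta(\mathcal{A},\le)$ is the set of $\le$-monotone semiring homomorphisms $\mathcal{A}\to\mathbb{R}_{\ge0}$. *)

theory Defs
  imports "HOL-Analysis.Analysis" "Jordan_Normal_Form.Schur_Decomposition"
begin

text \<open>A graph is a pair (n, E): vertex set {0..<n}, adjacency E (symmetric, irreflexive,
  false outside the vertex set).\<close>
type_synonym graph = "nat \<times> (nat \<Rightarrow> nat \<Rightarrow> bool)"

definition wf_graph :: "graph \<Rightarrow> bool" where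
  "wf_graph G = (case G of (n, E) \<Rightarrow>
     (\<forall>i j. E i j \<longrightarrow> i < n \<and> j < n \<and> i \<noteq> j) \<and> (\<forall>i j. E i j \<longrightarrow> E j i))"

definition gsim :: "graph \<Rightarrow> nat \<Rightarrow> nat \<Rightarrow> bool" where
  "gsim G i j = (i = j \<or> snd G i j)"

definition gcompl :: "graph \<Rightarrow> graph" where
  "gcompl G = (case G of (n, E) \<Rightarrow> (n, \<lambda>i j. i < n \<and> j < n \<and> i \<noteq> j \<and> \<not> E i j))"

text \<open>Strong product; vertex (i,k) is encoded as i*m+k.\<close>
definition strong_prod :: "graph \<Rightarrow> graph \<Rightarrow> graph" where
  "strong_prod G H = (case G of (n, E) \<Rightarrow> case H of (m, F) \<Rightarrow>
     (n * m, \<lambda>v w. v < n * m \<and> w < n * m \<and> v \<noteq> w \<and>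
        gsim G (v div m) (w div m) \<and> gsim H (v mod m) (w mod m)))"

definition K1 :: graph where "K1 = (1, \<lambda>_ _. False)"

definition indep_sets :: "graph \<Rightarrow> nat set set" where
  "indep_sets G = {I. I \<subseteq> {..<fst G} \<and> (\<forall>i\<in>I. \<forall>j\<in>I. \<not> snd G i j)}"

definition frac_chromatic :: "graph \<Rightarrow> real" where
  "frac_chromatic G = Inf {(\<Sum>I\<in>indep_sets G. w I) | w.
      (\<forall>I. 0 \<le> w I) \<and> (\<forall>v < fst G. 1 \<le> (\<Sum>I\<in>{I\<in>indep_sets G. v \<in> I}. w I))}"

definition frac_clique_cover :: "graph \<Rightarrow> real" where
  "frac_clique_cover G = frac_chromatic (gcompl G)"

type_synonym ncgraph = "nat \<times> complex mat set"

definition mat_sum_list :: "nat \<Rightarrow> complex mat list \<Rightarrow> complex mat" where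
  "mat_sum_list m Ms = foldr (+) Ms (0\<^sub>m m m)"

text \<open>T \<le> S: existence of a cohomomorphism from T to S.\<close>
definition nc_le :: "ncgraph \<Rightarrow> ncgraph \<Rightarrow> bool" where
  "nc_le T S = (case T of (m, Tm) \<Rightarrow> case S of (n, Sm) \<Rightarrow>
     (\<exists>Es :: complex mat list.
        (\<forall>E\<in>set Es. E \<in> carrier_mat n m) \<and>
        mat_sum_list m (map (\<lambda>E. mat_adjoint E * E) Es) = 1\<^sub>m m \<and>
        (\<forall>E\<in>set Es. \<forall>E'\<in>set Es. \<forall>X\<in>Sm. mat_adjoint E * X * E' \<in> Tm)))"

text \<open>\<open>\<widehat>G\<close> = span of |x><x'| with x \<simeq> x'.\<close>
definition graph_nc :: "graph \<Rightarrow> complex mat set" where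
  "graph_nc G = {A \<in> carrier_mat (fst G) (fst G).
      \<forall>i < fst G. \<forall>j < fst G. \<not> gsim G i j \<longrightarrow> A $$ (i, j) = 0}"

definition kron_id :: "complex mat \<Rightarrow> nat \<Rightarrow> complex mat" where
  "kron_id A d = mat (dim_row A * d) (dim_col A * d)
     (\<lambda>(i, j). if i mod d = j mod d then A $$ (i div d, j div d) else 0)"

section \<open>The semiring \<open>\<A>\<close>, presented by lists of (G_k, d_k) meaning \<open>\<Oplus>\<^sub>k \<widehat>G_k \<otimes> C_d_k\<close>\<close>

type_synonym arep = "(graph \<times> nat) list"

definition wf_arep :: "arep \<Rightarrow> bool" where
  "wf_arep a = (\<forall>(G, d)\<in>set a. wf_graph G \<and> 1 \<le> d)"

fun arep_dim :: "arep \<Rightarrow> nat" where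
  "arep_dim [] = 0"
| "arep_dim ((G, d) # r) = fst G * d + arep_dim r"

fun arep_space :: "arep \<Rightarrow> complex mat set" where
  "arep_space [] = {0\<^sub>m 0 0}"
| "arep_space ((G, d) # r) =
     {four_block_mat (kron_id A d) (0\<^sub>m (fst G * d) (arep_dim r))
                     (0\<^sub>m (arep_dim r) (fst G * d)) B | A B. A \<in> graph_nc G \<and> B \<in> arep_space r}"

definition realize :: "arep \<Rightarrow> ncgraph" where
  "realize a = (arep_dim a, arep_space a)"

definition arep_zero :: arep where "arep_zero = []"
definition arep_one :: arep where "arep_one = [(K1, 1)]"
definition arep_add :: "arep \<Rightarrow> arep \<Rightarrow> arep" where "arep_add a b = a @ b"
definition arep_mult :: "arep \<Rightarrow> arep \<Rightarrow> arep" where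
  "arep_mult a b = concat (map (\<lambda>(G, d). map (\<lambda>(H, e). (strong_prod G H, d * e)) b) a)"

text \<open>\<open>\<Delta>(\<A>,\<le>)\<close>: nonnegative, \<open>\<le>\<close>-monotone semiring homomorphisms on \<open>\<A>\<close>
  (monotonicity in particular makes F invariant under unitary isomorphism of realizations,
  so F is a well-defined function on \<open>\<A>\<close>).\<close>
definition Delta_A :: "(arep \<Rightarrow> real) \<Rightarrow> bool" where
  "Delta_A F = (
     (\<forall>a. wf_arep a \<longrightarrow> 0 \<le> F a) \<and>
     F arep_zero = 0 \<and> F arep_one = 1 \<and>
     (\<forall>a b. wf_arep a \<longrightarrow> wf_arep b \<longrightarrow> F (arep_add a b) = F a + F b) \<and>
     (\<forall>a b. wf_arep a \<longrightarrow> wf_arep b \<longrightarrow> F (arep_mult a b) = F a * F b) \<and>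
     (\<forall>a b. wf_arep a \<longrightarrow> wf_arep b \<longrightarrow> nc_le (realize a) (realize b) \<longrightarrow> F a \<le> F b))"

definition f_alpha :: "(graph \<Rightarrow> real) \<Rightarrow> real \<Rightarrow> arep \<Rightarrow> real" where
  "f_alpha f \<alpha> a = (\<Sum>(G, d)\<leftarrow>a. f G * real d powr \<alpha>)"

end

theory Submission
  imports Defs "HOL-Real_Asymp.Real_Asymp"
begin

(* Let G_n be the graph on the sign vectors {1,-1}^n in which two distinct vectors are adjacent
   iff they are not orthogonal. The unit vectors x / sqrt n form an orthonormal representation of
   G_n, so the maps |x / sqrt n><x| form a cohomomorphism from hat(G_n) to C_n. If f_alpha, for f
   the fractional clique cover number, were monotone, it would follow that f(G_n) <= n^alpha.

   For n = 4p with p an odd prime, however, cliques of G_n are small. Split a clique according to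
   the first coordinate and to the parity of the number of entries -1; inside each of the four
   classes all inner products are nonzero multiples of 4 in (-4p, 4p), hence prime to p. The
   Frankl-Wilson argument bounds each class by sum_{i<p} C(n,i) <= 3^(p-1) (4/3)^n: the matrix of
   the values of prod_{0<i<p} (i - <x,y>) on a class is nonsingular mod p, being diagonal mod p,
   but its rank is at most the number of multilinear monomials of degree < p. Hence
   f(G_n) >= 2^n / (largest clique) >= 3/4 (27/16)^p, which outgrows (4p)^alpha for every real
   alpha. *)

section \<open>Sign vectors and multilinear polynomials\<close>

(* v < 2^n encodes the sign vector ((-1)^(bit v j))_{j<n}. *)
definition sign_bit :: "nat \<Rightarrow> nat \<Rightarrow> int" where
  "sign_bit v j = (if bit v j then -1 else 1)"

definition sign_inner :: "nat \<Rightarrow> nat \<Rightarrow> nat \<Rightarrow> int" where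
  "sign_inner n v w = (\<Sum>j<n. sign_bit v j * sign_bit w j)"

definition sign_monomial :: "nat set \<Rightarrow> nat \<Rightarrow> int" where
  "sign_monomial S w = (\<Prod>j\<in>S. sign_bit w j)"

lemma sign_bit_square [simp]: "sign_bit w j * sign_bit w j = 1"
  by (simp add: sign_bit_def)

lemma sign_inner_self [simp]: "sign_inner n v v = int n"
  by (simp add: sign_inner_def)

lemma sign_inner_commute: "sign_inner n v w = sign_inner n w v"
  by (simp add: sign_inner_def mult.commute)

definition toggle :: "nat \<Rightarrow> nat set \<Rightarrow> nat set" where
  "toggle j S = (if j \<in> S then S - {j} else insert j S)"

lemma toggle_toggle [simp]: "toggle j (toggle j S) = S"
  by (auto simp: toggle_def)

lemma toggle_subset_lessThan: "S \<subseteq> {..<n} \<Longrightarrow> j < n \<Longrightarrow> toggle j S \<subseteq> {..<n}"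
  by (auto simp: toggle_def)

lemma card_le_Suc_card_toggle: "finite S \<Longrightarrow> card S \<le> Suc (card (toggle j S))"
  by (cases "j \<in> S") (auto simp: toggle_def card_insert_le)

lemma sign_monomial_toggle:
  assumes "finite S"
  shows "sign_monomial S w * sign_bit w j = sign_monomial (toggle j S) w"
proof (cases "j \<in> S")
  case True
  then have "sign_monomial S w = sign_bit w j * sign_monomial (S - {j}) w"
    unfolding sign_monomial_def using assms by (simp add: prod.remove)
  then show ?thesis using True by (simp add: toggle_def mult.commute mult.left_commute)
next
  case False
  then show ?thesis using assms by (simp add: toggle_def sign_monomial_def mult.commute)
qed

definition sign_poly_degree_le :: "nat \<Rightarrow> nat \<Rightarrow> (nat \<Rightarrow> int) \<Rightarrow> bool" where
  "sign_poly_degree_le n d f \<longleftrightarrow> (\<exists>c. (\<forall>S. c S \<noteq> 0 \<longrightarrow> card S \<le> d) \<and>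
     (\<forall>w. f w = (\<Sum>S\<in>Pow {..<n}. c S * sign_monomial S w)))"

lemma sign_poly_degree_le_const: "sign_poly_degree_le n d (\<lambda>_. a)"
  unfolding sign_poly_degree_le_def
  by (rule exI[of _ "\<lambda>S. if S = {} then a else 0"])
     (auto simp: sign_monomial_def sum.remove[of _ "{}"])

lemma sign_poly_degree_le_mono:
  "sign_poly_degree_le n d f \<Longrightarrow> d \<le> e \<Longrightarrow> sign_poly_degree_le n e f"
  unfolding sign_poly_degree_le_def by (meson order_trans)

lemma sign_poly_degree_le_add:
  assumes "sign_poly_degree_le n d f" "sign_poly_degree_le n d g"
  shows "sign_poly_degree_le n d (\<lambda>w. f w + g w)"
proof -
  obtain c where "\<forall>S. c S \<noteq> 0 \<longrightarrow> card S \<le> d"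
    "\<forall>w. f w = (\<Sum>S\<in>Pow {..<n}. c S * sign_monomial S w)"
    using assms(1) unfolding sign_poly_degree_le_def by blast
  moreover obtain c' where "\<forall>S. c' S \<noteq> 0 \<longrightarrow> card S \<le> d"
    "\<forall>w. g w = (\<Sum>S\<in>Pow {..<n}. c' S * sign_monomial S w)"
    using assms(2) unfolding sign_poly_degree_le_def by blast
  moreover have "card S \<le> d" if "c S + c' S \<noteq> 0" for S
    using that calculation(1,3) by (metis add.left_neutral add.right_neutral)
  ultimately show ?thesis
    unfolding sign_poly_degree_le_def
    by (intro exI[of _ "\<lambda>S. c S + c' S"]) (auto simp: sum.distrib distrib_right)
qed

lemma sign_poly_degree_le_scale:
  assumes "sign_poly_degree_le n d f"
  shows "sign_poly_degree_le n d (\<lambda>w. a * f w)"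
proof -
  obtain c where "\<forall>S. c S \<noteq> 0 \<longrightarrow> card S \<le> d"
    "\<forall>w. f w = (\<Sum>S\<in>Pow {..<n}. c S * sign_monomial S w)"
    using assms unfolding sign_poly_degree_le_def by blast
  then show ?thesis
    unfolding sign_poly_degree_le_def
    by (intro exI[of _ "\<lambda>S. a * c S"]) (auto simp: sum_distrib_left mult.assoc)
qed

lemma sign_poly_degree_le_sum:
  assumes "finite J" "\<And>j. j \<in> J \<Longrightarrow> sign_poly_degree_le n d (f j)"
  shows "sign_poly_degree_le n d (\<lambda>w. \<Sum>j\<in>J. f j w)"
  using assms
proof (induction J rule: finite_induct)
  case empty
  show ?case using sign_poly_degree_le_const[of n d 0] by simp
next
  case (insert j J)
  then show ?case by (auto intro!: sign_poly_degree_le_add)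
qed

lemma sign_poly_degree_le_mult_sign_bit:
  assumes "sign_poly_degree_le n d f" "j < n"
  shows "sign_poly_degree_le n (Suc d) (\<lambda>w. f w * sign_bit w j)"
proof -
  obtain c where c: "\<forall>S. c S \<noteq> 0 \<longrightarrow> card S \<le> d"
    and f: "\<forall>w. f w = (\<Sum>S\<in>Pow {..<n}. c S * sign_monomial S w)"
    using assms(1) unfolding sign_poly_degree_le_def by blast
  have "f w * sign_bit w j = (\<Sum>T\<in>Pow {..<n}. c (toggle j T) * sign_monomial T w)" for w
  proof -
    have "f w * sign_bit w j = (\<Sum>S\<in>Pow {..<n}. c S * sign_monomial (toggle j S) w)"
      unfolding f[rule_format] sum_distrib_right
      by (intro sum.cong refl) (metis PowD finite_lessThan finite_subset mult.assoc sign_monomial_toggle)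
    also have "\<dots> = (\<Sum>T\<in>Pow {..<n}. c (toggle j T) * sign_monomial T w)"
      by (rule sum.reindex_bij_witness[of _ "toggle j" "toggle j"])
         (simp_all add: toggle_subset_lessThan[OF _ assms(2)])
    finally show ?thesis .
  qed
  moreover have "card T \<le> Suc d" if "c (toggle j T) \<noteq> 0" for T
  proof (cases "finite T")
    case True
    then show ?thesis using c that card_le_Suc_card_toggle[of T j] by fastforce
  qed simp
  ultimately show ?thesis
    unfolding sign_poly_degree_le_def by (intro exI[of _ "\<lambda>T. c (toggle j T)"]) blast
qed

lemma sign_poly_degree_le_mult_affine:
  assumes "sign_poly_degree_le n d f"
  shows "sign_poly_degree_le n (Suc d) (\<lambda>w. f w * (a - sign_inner n v w))"
proof -
  have "f w * (a - sign_inner n v w)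
      = a * f w + (\<Sum>j<n. - sign_bit v j * (f w * sign_bit w j))" for w
    by (simp add: sign_inner_def sum_distrib_left sum_negf algebra_simps)
  moreover have "sign_poly_degree_le n (Suc d)
      (\<lambda>w. a * f w + (\<Sum>j<n. - sign_bit v j * (f w * sign_bit w j)))"
    using sign_poly_degree_le_mono[OF assms, of "Suc d"]
    by (intro sign_poly_degree_le_add sign_poly_degree_le_scale sign_poly_degree_le_sum
        sign_poly_degree_le_mult_sign_bit[OF assms]) simp_all
  ultimately show ?thesis by simp
qed

lemma sign_poly_degree_le_prod:
  assumes "finite I"
  shows "sign_poly_degree_le n (card I) (\<lambda>w. \<Prod>i\<in>I. a i - sign_inner n v w)"
  using assms
proof (induction I rule: finite_induct)
  case empty
  show ?case using sign_poly_degree_le_const[of n 0 1] by simp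
next
  case (insert i I)
  have "sign_poly_degree_le n (Suc (card I))
      (\<lambda>w. (\<Prod>i\<in>I. a i - sign_inner n v w) * (a i - sign_inner n v w))"
    by (rule sign_poly_degree_le_mult_affine[OF insert.IH])
  then show ?case using insert.hyps by (simp add: mult.commute)
qed

section \<open>The Frankl--Wilson bound\<close>

definition small_subsets :: "nat \<Rightarrow> nat \<Rightarrow> nat set set" where
  "small_subsets n d = {S. S \<subseteq> {..<n} \<and> card S \<le> d}"

lemma finite_small_subsets: "finite (small_subsets n d)"
  unfolding small_subsets_def by (rule finite_subset[of _ "Pow {..<n}"]) auto

lemma card_small_subsets: "card (small_subsets n d) = (\<Sum>i\<le>d. n choose i)"
proof -
  have "small_subsets n d = (\<Union>i\<le>d. {S. S \<subseteq> {..<n} \<and> card S = i})"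
    by (auto simp: small_subsets_def)
  also have "card \<dots> = (\<Sum>i\<le>d. card {S. S \<subseteq> {..<n} \<and> card S = i})"
    by (rule card_UN_disjoint) (auto intro: finite_subset[of _ "Pow {..<n}"])
  finally show ?thesis by (simp add: n_subsets)
qed

lemma sign_poly_degree_le_small_subsets:
  assumes "sign_poly_degree_le n d f"
  obtains c where "\<And>w. f w = (\<Sum>S\<in>small_subsets n d. c S * sign_monomial S w)"
proof -
  obtain c where c: "\<forall>S. c S \<noteq> 0 \<longrightarrow> card S \<le> d"
    and f: "\<forall>w. f w = (\<Sum>S\<in>Pow {..<n}. c S * sign_monomial S w)"
    using assms unfolding sign_poly_degree_le_def by blast
  have "f w = (\<Sum>S\<in>small_subsets n d. c S * sign_monomial S w)" for w
    unfolding f[rule_format]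
    by (rule sum.mono_neutral_right) (use c in \<open>auto simp: small_subsets_def\<close>)
  then show thesis by (rule that)
qed

definition frankl_wilson_poly :: "nat \<Rightarrow> nat \<Rightarrow> nat \<Rightarrow> nat \<Rightarrow> int" where
  "frankl_wilson_poly n p v w = (\<Prod>i\<in>{1..<p}. int i - sign_inner n v w)"

lemma frankl_wilson_poly_expansion:
  obtains c where
    "\<And>v w. frankl_wilson_poly n p v w = (\<Sum>S\<in>small_subsets n (p - 1). c v S * sign_monomial S w)"
proof -
  have "\<exists>c. \<forall>w. frankl_wilson_poly n p v w = (\<Sum>S\<in>small_subsets n (p - 1). c S * sign_monomial S w)"
    for v
    using sign_poly_degree_le_small_subsets[OF sign_poly_degree_le_prod[of "{1..<p}" n int v]]
    unfolding frankl_wilson_poly_def by auto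
  then show thesis using that by metis
qed

lemma dvd_frankl_wilson_poly:
  assumes p: "prime p" and not_dvd: "\<not> int p dvd sign_inner n v w"
  shows "int p dvd frankl_wilson_poly n p v w"
proof -
  define r where "r = sign_inner n v w mod int p"
  have "r \<noteq> 0" "0 \<le> r" "r < int p"
    using not_dvd prime_gt_0_nat[OF p] unfolding r_def by (auto simp: dvd_eq_mod_eq_0)
  then have r: "nat r \<in> {1..<p}" by auto
  have "int p dvd int (nat r) - sign_inner n v w"
    using \<open>0 \<le> r\<close> dvd_minus_mod[of "int p" "sign_inner n v w"]
    unfolding r_def by (simp add: dvd_diff_commute)
  also have "\<dots> dvd frankl_wilson_poly n p v w"
    unfolding frankl_wilson_poly_def using r by (rule dvd_prodI[OF finite_atLeastLessThan])
  finally show ?thesis .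
qed

lemma not_dvd_frankl_wilson_poly_self:
  assumes p: "prime p" and "p dvd n"
  shows "\<not> int p dvd frankl_wilson_poly n p v v"
proof
  assume "int p dvd frankl_wilson_poly n p v v"
  then obtain i where i: "i \<in> {1..<p}" and "int p dvd int i - int n"
    using p unfolding frankl_wilson_poly_def sign_inner_self
    by (auto simp: prime_dvd_prod_iff prime_nat_int_transfer)
  with \<open>p dvd n\<close> have "p dvd i"
    by (metis dvd_add_left_iff int_dvd_int_iff diff_add_cancel of_nat_dvd_iff)
  then show False using i by (auto dest: dvd_imp_le)
qed

lemma det_low_rank_eq_0:
  fixes f :: "nat \<Rightarrow> nat \<Rightarrow> 'a::comm_ring_1"
  assumes "D < k"
  shows "det (mat k k (\<lambda>(a, b). \<Sum>s<D. f a s * g s b)) = 0"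
proof -
  define U where "U = mat k k (\<lambda>(a, s). if s < D then f a s else 0)"
  define W where "W = mat k k (\<lambda>(s, b). if s < D then g s b else 0)"
  have "mat k k (\<lambda>(a, b). \<Sum>s<D. f a s * g s b) = U * W"
  proof (rule eq_matI)
    fix a b assume "a < dim_row (U * W)" "b < dim_col (U * W)"
    then have ab: "a < k" "b < k" by (auto simp: U_def W_def)
    have "(U * W) $$ (a, b) = (\<Sum>s<k. U $$ (a, s) * W $$ (s, b))"
      using ab by (simp add: U_def W_def scalar_prod_def atLeast0LessThan)
    also have "\<dots> = (\<Sum>s<D. f a s * g s b)"
      using ab assms by (intro sum.mono_neutral_cong_right) (auto simp: U_def W_def)
    finally show "mat k k (\<lambda>(a, b). \<Sum>s<D. f a s * g s b) $$ (a, b) = (U * W) $$ (a, b)"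
      using ab by simp
  qed (auto simp: U_def W_def)
  moreover have "det W = 0"
  proof -
    have W: "W \<in> carrier_mat k k" by (simp add: W_def)
    have "(\<Prod>i = 0..<k. W $$ (i, q i)) = 0" if "q permutes {0..<k}" for q
      using assms permutes_in_image[OF that, of D]
      by (intro prod_zero bexI[of _ D]) (auto simp: W_def)
    then show ?thesis unfolding det_def'[OF W] by simp
  qed
  ultimately show ?thesis
    using det_mult[of U k W] by (simp add: U_def W_def)
qed

lemma prime_not_dvd_det_if_dvd_off_diag:
  fixes M :: "int mat" and p :: int
  assumes M: "M \<in> carrier_mat k k" and p: "prime p"
    and off_diag: "\<And>i j. i < k \<Longrightarrow> j < k \<Longrightarrow> i \<noteq> j \<Longrightarrow> p dvd M $$ (i, j)"
    and diag: "\<And>i. i < k \<Longrightarrow> \<not> p dvd M $$ (i, i)"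
  shows "\<not> p dvd det M"
proof
  define summand where "summand q = signof q * (\<Prod>i = 0..<k. M $$ (i, q i))" for q
  define Perms where "Perms = {q. q permutes {0..<k}}"
  have "det M = summand id + (\<Sum>q\<in>Perms - {id}. summand q)"
    unfolding det_def'[OF M] summand_def[symmetric] Perms_def
    by (subst sum.remove[of _ id]) (auto simp: finite_permutations permutes_id)
  moreover have "p dvd (\<Sum>q\<in>Perms - {id}. summand q)"
  proof (rule dvd_sum)
    fix q assume q: "q \<in> Perms - {id}"
    then have "q \<noteq> id" by blast
    then obtain i where "q i \<noteq> i" by (auto simp: fun_eq_iff)
    moreover have "q permutes {0..<k}" using q by (simp add: Perms_def)
    ultimately have i: "i < k" "q i < k"
      using permutes_in_image permutes_not_in by fastforce+
    with \<open>q i \<noteq> i\<close> have "p dvd M $$ (i, q i)" by (intro off_diag) auto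
    also have "\<dots> dvd (\<Prod>i = 0..<k. M $$ (i, q i))" using i by (intro dvd_prodI) auto
    finally show "p dvd summand q" unfolding summand_def by simp
  qed
  moreover assume "p dvd det M"
  ultimately have "p dvd summand id" by (simp add: dvd_add_left_iff)
  then obtain i where "i < k" "p dvd M $$ (i, i)"
    using p by (auto simp: summand_def prime_dvd_prod_iff)
  then show False using diag by blast
qed

theorem frankl_wilson_sign_vectors:
  assumes p: "prime p" and "p dvd n" and "finite A"
    and not_dvd: "\<And>v w. v \<in> A \<Longrightarrow> w \<in> A \<Longrightarrow> v \<noteq> w \<Longrightarrow> \<not> int p dvd sign_inner n v w"
  shows "card A \<le> card (small_subsets n (p - 1))"
proof (rule ccontr)
  define k where "k = card A"
  define D where "D = card (small_subsets n (p - 1))"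
  assume "\<not> card A \<le> card (small_subsets n (p - 1))"
  then have "D < k" by (simp add: k_def D_def)
  obtain xs where xs: "bij_betw xs {0..<k} A"
    using ex_bij_betw_nat_finite[OF \<open>finite A\<close>] unfolding k_def by blast
  obtain ms where ms: "bij_betw ms {0..<D} (small_subsets n (p - 1))"
    using ex_bij_betw_nat_finite[OF finite_small_subsets] unfolding D_def by blast
  obtain c where c: "\<And>v w. frankl_wilson_poly n p v w
      = (\<Sum>S\<in>small_subsets n (p - 1). c v S * sign_monomial S w)"
    using frankl_wilson_poly_expansion by blast
  define M where "M = mat k k (\<lambda>(a, b). frankl_wilson_poly n p (xs a) (xs b))"
  have "M = mat k k (\<lambda>(a, b). \<Sum>s<D. c (xs a) (ms s) * sign_monomial (ms s) (xs b))"
    unfolding M_def c sum.reindex_bij_betw[OF ms, symmetric] atLeast0LessThan ..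
  then have "det M = 0"
    using det_low_rank_eq_0[OF \<open>D < k\<close>] by simp
  moreover have "\<not> int p dvd det M"
  proof (rule prime_not_dvd_det_if_dvd_off_diag)
    show "M \<in> carrier_mat k k" by (simp add: M_def)
    show "prime (int p)" using p by (simp add: prime_nat_int_transfer)
    show "int p dvd M $$ (a, b)" if "a < k" "b < k" "a \<noteq> b" for a b
    proof -
      have "xs a \<in> A" "xs b \<in> A" "xs a \<noteq> xs b"
        using that xs by (auto simp: bij_betw_def inj_on_eq_iff)
      then show ?thesis using that by (simp add: M_def dvd_frankl_wilson_poly[OF p] not_dvd)
    qed
    show "\<not> int p dvd M $$ (a, a)" if "a < k" for a
      using that not_dvd_frankl_wilson_poly_self[OF p \<open>p dvd n\<close>] by (simp add: M_def)
  qed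
  ultimately show False by simp
qed

section \<open>Pairwise non-orthogonal sign vectors\<close>

definition bit_count :: "nat \<Rightarrow> nat \<Rightarrow> int" where
  "bit_count n v = (\<Sum>j<n. of_bool (bit v j))"

lemma sign_inner_eq_bit_count:
  "sign_inner n v w
     = int n - 2 * bit_count n v - 2 * bit_count n w + 4 * (\<Sum>j<n. of_bool (bit v j \<and> bit w j))"
proof -
  have "sign_inner n v w = (\<Sum>j<n. 1 - 2 * of_bool (bit v j) - 2 * of_bool (bit w j)
                                    + 4 * of_bool (bit v j \<and> bit w j))"
    unfolding sign_inner_def by (intro sum.cong) (auto simp: sign_bit_def)
  then show ?thesis
    unfolding bit_count_def by (simp add: sum.distrib sum_subtractf sum_distrib_left)
qed

lemma four_dvd_sign_inner:
  assumes "4 dvd n" and "even (bit_count n v) = even (bit_count n w)"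
  shows "4 dvd sign_inner n v w"
proof -
  obtain m where "bit_count n v + bit_count n w = 2 * m"
    using assms(2) by (metis even_add evenE)
  moreover obtain l where "n = 4 * l" using assms(1) by blast
  ultimately have "int n - 2 * bit_count n v - 2 * bit_count n w + 4 * c = 4 * (int l - m + c)"
    for c :: int
    by simp
  then show ?thesis
    unfolding sign_inner_eq_bit_count by (metis dvd_triv_left)
qed

lemma not_bit_if_less_power: "(v::nat) < 2 ^ n \<Longrightarrow> n \<le> j \<Longrightarrow> \<not> bit v j"
  by (metis bit_take_bit_iff not_le take_bit_nat_eq_self)

lemma sign_inner_less:
  assumes "v < 2 ^ n" "w < 2 ^ n" "v \<noteq> w"
  shows "sign_inner n v w < int n"
proof -
  obtain j where "j < n" "bit v j \<noteq> bit w j"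
    using assms not_bit_if_less_power by (metis bit_eq_iff not_le)
  then have "sign_inner n v w < (\<Sum>j<n. 1)"
    unfolding sign_inner_def by (intro sum_strict_mono_ex1) (auto simp: sign_bit_def)
  then show ?thesis by simp
qed

lemma sign_inner_greater:
  assumes "0 < n" "bit v 0 = bit w 0"
  shows "- int n < sign_inner n v w"
proof -
  have "(\<Sum>j<n. -1) < sign_inner n v w"
    unfolding sign_inner_def using assms by (intro sum_strict_mono_ex1) (auto simp: sign_bit_def)
  then show ?thesis by simp
qed

lemma prime_not_dvd_sign_inner:
  assumes p: "prime p" "3 \<le> p"
    and vw: "v < 2 ^ (4 * p)" "w < 2 ^ (4 * p)" "v \<noteq> w" "bit v 0 = bit w 0"
    and parity: "even (bit_count (4 * p) v) = even (bit_count (4 * p) w)"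
    and nonzero: "sign_inner (4 * p) v w \<noteq> 0"
  shows "\<not> int p dvd sign_inner (4 * p) v w"
proof
  assume "int p dvd sign_inner (4 * p) v w"
  moreover have "4 dvd sign_inner (4 * p) v w"
    using four_dvd_sign_inner[OF _ parity] by simp
  moreover have "coprime 4 (int p)"
  proof -
    have "\<not> int p dvd 2"
    proof
      assume "int p dvd 2"
      then have "p dvd 2" by (metis int_dvd_int_iff of_nat_numeral)
      then show False using p by (auto dest: dvd_imp_le)
    qed
    then have "\<not> int p dvd 2 ^ 2"
      using prime_dvd_power[of "int p" 2 2] p by (auto simp: prime_nat_int_transfer)
    then have "coprime (int p) (2 ^ 2)"
      using p by (intro prime_imp_coprime) (simp_all add: prime_nat_int_transfer)
    then show ?thesis by (simp add: coprime_commute[of 4])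
  qed
  ultimately have "4 * int p dvd sign_inner (4 * p) v w"
    by (simp add: divides_mult)
  then have "\<bar>4 * int p\<bar> \<le> \<bar>sign_inner (4 * p) v w\<bar>"
    by (rule dvd_imp_le_int[OF nonzero])
  moreover have "sign_inner (4 * p) v w < 4 * int p" using sign_inner_less[OF vw(1-3)] by simp
  moreover have "- (4 * int p) < sign_inner (4 * p) v w"
    using sign_inner_greater[OF _ vw(4), of "4 * p"] p by simp
  ultimately show False by linarith
qed

lemma card_pairwise_nonorth_le:
  assumes p: "prime p" "3 \<le> p" and A: "A \<subseteq> {..<2 ^ (4 * p)}"
    and clique: "\<And>v w. v \<in> A \<Longrightarrow> w \<in> A \<Longrightarrow> v \<noteq> w \<Longrightarrow> sign_inner (4 * p) v w \<noteq> 0"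
  shows "card A \<le> 4 * card (small_subsets (4 * p) (p - 1))"
proof -
  define label where "label v = (bit v 0, even (bit_count (4 * p) v))" for v
  define part where "part \<kappa> = {v \<in> A. label v = \<kappa>}" for \<kappa>
  have "finite A" using A finite_subset by blast
  have "A = (\<Union>\<kappa>. part \<kappa>)" by (auto simp: part_def)
  then have "card A \<le> (\<Sum>\<kappa>\<in>UNIV. card (part \<kappa>))"
    using card_UN_le[of UNIV part] by simp
  also have "\<dots> \<le> (\<Sum>\<kappa>\<in>(UNIV :: (bool \<times> bool) set). card (small_subsets (4 * p) (p - 1)))"
  proof (intro sum_mono frankl_wilson_sign_vectors[OF p(1)])
    fix \<kappa> v w assume "v \<in> part \<kappa>" "w \<in> part \<kappa>" "v \<noteq> w"
    with A clique show "\<not> int p dvd sign_inner (4 * p) v w"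
      by (intro prime_not_dvd_sign_inner[OF p]) (auto simp: part_def label_def)
  qed (use \<open>finite A\<close> in \<open>simp_all add: part_def\<close>)
  also have "\<dots> = 4 * card (small_subsets (4 * p) (p - 1))"
    by (simp add: card_UNIV_bool)
  finally show ?thesis .
qed

section \<open>The fractional clique cover number of the non-orthogonality graph\<close>

lemma finite_indep_sets: "finite (indep_sets H)"
  unfolding indep_sets_def by (rule finite_subset[of _ "Pow {..<fst H}"]) auto

lemma fractional_cover_weight_ge:
  fixes w :: "nat set \<Rightarrow> real"
  assumes indep: "\<And>I. I \<in> indep_sets H \<Longrightarrow> card I \<le> m" and nonneg: "\<And>I. 0 \<le> w I"
    and cover: "\<And>v. v < fst H \<Longrightarrow> 1 \<le> (\<Sum>I\<in>{I \<in> indep_sets H. v \<in> I}. w I)"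
  shows "real (fst H) \<le> real m * (\<Sum>I\<in>indep_sets H. w I)"
proof -
  have "real (fst H) = (\<Sum>v<fst H. 1)" by simp
  also have "\<dots> \<le> (\<Sum>v<fst H. \<Sum>I\<in>{I \<in> indep_sets H. v \<in> I}. w I)"
    using cover by (intro sum_mono) auto
  also have "\<dots> = (\<Sum>v<fst H. \<Sum>I\<in>indep_sets H. if v \<in> I then w I else 0)"
    using finite_indep_sets by (simp add: sum.inter_filter)
  also have "\<dots> = (\<Sum>I\<in>indep_sets H. \<Sum>v<fst H. if v \<in> I then w I else 0)"
    by (rule sum.swap)
  also have "\<dots> = (\<Sum>I\<in>indep_sets H. real (card I) * w I)"
  proof (intro sum.cong refl)
    fix I assume "I \<in> indep_sets H"
    then have "{v \<in> {..<fst H}. v \<in> I} = I" by (auto simp: indep_sets_def)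
    then show "(\<Sum>v<fst H. if v \<in> I then w I else 0) = real (card I) * w I"
      using sum.inter_filter[of "{..<fst H}" "\<lambda>_. w I" "\<lambda>v. v \<in> I"] by simp
  qed
  also have "\<dots> \<le> (\<Sum>I\<in>indep_sets H. real m * w I)"
    using indep nonneg by (intro sum_mono mult_right_mono) auto
  also have "\<dots> = real m * (\<Sum>I\<in>indep_sets H. w I)" by (simp add: sum_distrib_left)
  finally show ?thesis .
qed

lemma frac_chromatic_ge:
  assumes irrefl: "\<And>v. \<not> snd H v v" and "0 < m"
    and indep: "\<And>I. I \<in> indep_sets H \<Longrightarrow> card I \<le> m"
  shows "real (fst H) / real m \<le> frac_chromatic H"
proof -
  define covers where "covers w \<longleftrightarrow> (\<forall>I. 0 \<le> w I) \<and>
    (\<forall>v < fst H. 1 \<le> (\<Sum>I\<in>{I \<in> indep_sets H. v \<in> I}. w I))" for w :: "nat set \<Rightarrow> real"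
  have "covers (\<lambda>_. 1)"
    unfolding covers_def
  proof (intro conjI allI impI)
    fix v assume "v < fst H"
    then have "{v} \<in> {I \<in> indep_sets H. v \<in> I}"
      using irrefl by (simp add: indep_sets_def)
    then have "card {I \<in> indep_sets H. v \<in> I} \<noteq> 0" using finite_indep_sets by auto
    then show "1 \<le> (\<Sum>I\<in>{I \<in> indep_sets H. v \<in> I}. 1 :: real)" by simp
  qed simp
  then have nonempty: "{sum w (indep_sets H) | w. covers w} \<noteq> {}" by blast
  have "real (fst H) / real m \<le> sum w (indep_sets H)" if "covers w" for w
    using fractional_cover_weight_ge[OF indep, where w = w] that \<open>0 < m\<close>
    by (simp add: covers_def divide_le_eq mult.commute)
  then have "real (fst H) / real m \<le> Inf {sum w (indep_sets H) | w. covers w}"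
    using nonempty by (intro cInf_greatest) auto
  then show ?thesis unfolding frac_chromatic_def covers_def .
qed

lemma sum_binomial_le:
  fixes x :: real
  assumes "0 < x" "x \<le> 1"
  shows "(\<Sum>i\<le>d. real (n choose i)) \<le> (1 + x) ^ n / x ^ d"
proof -
  have "(\<Sum>i\<le>d. real (n choose i)) * x ^ d \<le> (\<Sum>i\<le>d. real (n choose i) * x ^ i)"
    unfolding sum_distrib_right using assms
    by (intro sum_mono mult_left_mono power_decreasing) auto
  also have "\<dots> \<le> (\<Sum>i\<le>max d n. real (n choose i) * x ^ i)"
    using assms by (intro sum_mono2) auto
  also have "\<dots> = (\<Sum>i\<le>n. real (n choose i) * x ^ i)"
    by (rule sum.mono_neutral_right) auto
  also have "\<dots> = (1 + x) ^ n"
    using binomial_ring[of x 1 n] by (simp add: add.commute)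
  finally show ?thesis using assms by (simp add: le_divide_eq)
qed

lemma card_small_subsets_le:
  assumes "0 < p"
  shows "3 * real (card (small_subsets (4 * p) (p - 1))) \<le> (256 / 27) ^ p"
proof -
  have "3 * real (card (small_subsets (4 * p) (p - 1)))
      \<le> 3 * ((1 + 1 / 3) ^ (4 * p) / (1 / 3) ^ (p - 1))"
    using sum_binomial_le[where x = "1 / 3" and d = "p - 1" and n = "4 * p"]
    by (simp add: card_small_subsets)
  also have "\<dots> = (4 / 3) ^ (4 * p) * 3 ^ Suc (p - 1)"
    by (simp add: power_one_over)
  also have "\<dots> = ((4 / 3) ^ 4 * 3) ^ p"
    using assms by (simp add: power_mult power_mult_distrib)
  also have "\<dots> = (256 / 27) ^ p"
    by (rule arg_cong[where f = "\<lambda>x. x ^ p"]) (simp add: power_divide)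
  finally show ?thesis .
qed

definition nonorth_graph :: "nat \<Rightarrow> graph" where
  "nonorth_graph n = (2 ^ n, \<lambda>v w. v < 2 ^ n \<and> w < 2 ^ n \<and> v \<noteq> w \<and> sign_inner n v w \<noteq> 0)"

lemma wf_nonorth_graph: "wf_graph (nonorth_graph n)"
  by (auto simp: wf_graph_def nonorth_graph_def sign_inner_commute)

lemma frac_clique_cover_nonorth_graph_ge:
  assumes p: "prime p" "3 \<le> p"
  shows "3 / 4 * (27 / 16) ^ p \<le> frac_clique_cover (nonorth_graph (4 * p))"
proof -
  define D where "D = card (small_subsets (4 * p) (p - 1))"
  have "D \<noteq> 0"
    using finite_small_subsets[of "4 * p" "p - 1"] by (auto simp: D_def small_subsets_def)
  have "(27 / 16) ^ p * (3 * real D) \<le> (27 / 16) ^ p * (256 / 27) ^ p"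
    using card_small_subsets_le[of p] p unfolding D_def by (intro mult_left_mono) auto
  also have "\<dots> = 2 ^ (4 * p)"
    by (simp add: power_mult_distrib[symmetric] power_mult)
  finally have "3 / 4 * (27 / 16) ^ p \<le> real (2 ^ (4 * p)) / real (4 * D)"
    using \<open>D \<noteq> 0\<close> by (simp add: field_simps)
  also have "\<dots> = real (fst (gcompl (nonorth_graph (4 * p)))) / real (4 * D)"
    by (simp add: gcompl_def nonorth_graph_def)
  also have "\<dots> \<le> frac_clique_cover (nonorth_graph (4 * p))"
    unfolding frac_clique_cover_def
  proof (rule frac_chromatic_ge)
    fix I assume "I \<in> indep_sets (gcompl (nonorth_graph (4 * p)))"
    then show "card I \<le> 4 * D"
      unfolding D_def
      by (intro card_pairwise_nonorth_le[OF p])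
         (auto simp: indep_sets_def gcompl_def nonorth_graph_def)
  qed (use \<open>D \<noteq> 0\<close> in \<open>simp_all add: gcompl_def nonorth_graph_def\<close>)
  finally show ?thesis .
qed

section \<open>A cohomomorphism into the scalars\<close>

lemma dim_row_mat_adjoint [simp]: "dim_row (mat_adjoint A) = dim_col A"
  and dim_col_mat_adjoint [simp]: "dim_col (mat_adjoint A) = dim_row A"
  unfolding mat_adjoint_def by (simp_all add: mat_of_rows_def)

lemma index_mat_adjoint [simp]:
  "i < dim_col A \<Longrightarrow> j < dim_row A \<Longrightarrow> mat_adjoint A $$ (i, j) = conjugate (A $$ (j, i))"
  unfolding mat_adjoint_def by (simp add: mat_of_rows_def)

lemma mat_sum_list_carrier_index:
  assumes "\<forall>M\<in>set Ms. M \<in> carrier_mat m m"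
  shows "mat_sum_list m Ms \<in> carrier_mat m m \<and>
    (\<forall>i<m. \<forall>j<m. mat_sum_list m Ms $$ (i, j) = (\<Sum>M\<leftarrow>Ms. M $$ (i, j)))"
  using assms by (induction Ms) (auto simp: mat_sum_list_def)

definition ket_bra :: "nat \<Rightarrow> nat \<Rightarrow> (nat \<Rightarrow> complex) \<Rightarrow> nat \<Rightarrow> complex mat" where
  "ket_bra n N a x = mat n N (\<lambda>(j, k). if k = x then a j else 0)"

lemma mat_adjoint_ket_bra_mult:
  "mat_adjoint (ket_bra n N a x) * ket_bra n N b y
     = (\<Sum>j<n. cnj (a j) * b j) \<cdot>\<^sub>m ket_bra N N (\<lambda>k. of_bool (k = x)) y"
proof (rule eq_matI)
  fix k l assume "k < dim_row ((\<Sum>j<n. cnj (a j) * b j) \<cdot>\<^sub>m ket_bra N N (\<lambda>k. of_bool (k = x)) y)"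
    "l < dim_col ((\<Sum>j<n. cnj (a j) * b j) \<cdot>\<^sub>m ket_bra N N (\<lambda>k. of_bool (k = x)) y)"
  then have kl: "k < N" "l < N" by (auto simp: ket_bra_def)
  have "(mat_adjoint (ket_bra n N a x) * ket_bra n N b y) $$ (k, l)
      = (\<Sum>j<n. cnj (ket_bra n N a x $$ (j, k)) * ket_bra n N b y $$ (j, l))"
    using kl by (simp add: ket_bra_def scalar_prod_def atLeast0LessThan)
  also have "\<dots> = (if k = x \<and> l = y then (\<Sum>j<n. cnj (a j) * b j) else 0)"
    using kl by (auto simp: ket_bra_def)
  finally show "(mat_adjoint (ket_bra n N a x) * ket_bra n N b y) $$ (k, l)
      = ((\<Sum>j<n. cnj (a j) * b j) \<cdot>\<^sub>m ket_bra N N (\<lambda>k. of_bool (k = x)) y) $$ (k, l)"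
    using kl by (simp add: ket_bra_def)
qed (simp_all add: ket_bra_def)

lemma mat_sum_list_ket_bra_basis:
  "mat_sum_list N (map (\<lambda>x. ket_bra N N (\<lambda>k. of_bool (k = x)) x) [0..<N]) = 1\<^sub>m N"
proof -
  have "\<forall>M\<in>set (map (\<lambda>x. ket_bra N N (\<lambda>k. of_bool (k = x)) x) [0..<N]). M \<in> carrier_mat N N"
    by (auto simp: ket_bra_def)
  note sum_list = mat_sum_list_carrier_index[OF this]
  show ?thesis
  proof (rule eq_matI)
    fix k l assume "k < dim_row (1\<^sub>m N)" "l < dim_col (1\<^sub>m N)"
    then have kl: "k < N" "l < N" by auto
    have "(\<Sum>x\<in>{0..<N}. ket_bra N N (\<lambda>k. of_bool (k = x)) x $$ (k, l))
        = (\<Sum>x\<in>{0..<N}. if x = k then of_bool (k = l) else 0)"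
      using kl by (intro sum.cong) (auto simp: ket_bra_def)
    then show "mat_sum_list N (map (\<lambda>x. ket_bra N N (\<lambda>k. of_bool (k = x)) x) [0..<N]) $$ (k, l)
        = 1\<^sub>m N $$ (k, l)"
      using sum_list kl by (simp add: sum_set_upt_conv_sum_list_nat[symmetric] comp_def)
  qed (use sum_list in auto)
qed

lemma graph_nc_subset_arep_space: "graph_nc G \<subseteq> arep_space [(G, 1)]"
proof
  fix A assume A: "A \<in> graph_nc G"
  then have "A = four_block_mat (kron_id A 1) (0\<^sub>m (fst G * 1) 0) (0\<^sub>m 0 (fst G * 1)) (0\<^sub>m 0 0)"
    by (intro eq_matI) (auto simp: graph_nc_def four_block_mat_def kron_id_def Let_def)
  then show "A \<in> arep_space [(G, 1)]" using A by auto
qed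

lemma arep_space_K1:
  assumes "X \<in> arep_space [(K1, d)]"
  shows "\<exists>c. X = c \<cdot>\<^sub>m 1\<^sub>m d"
proof -
  obtain A where "A \<in> graph_nc K1"
    and "X = four_block_mat (kron_id A d) (0\<^sub>m (fst K1 * d) 0) (0\<^sub>m 0 (fst K1 * d)) (0\<^sub>m 0 0)"
    using assms by auto
  then have "X = A $$ (0, 0) \<cdot>\<^sub>m 1\<^sub>m d"
    by (intro eq_matI) (auto simp: graph_nc_def K1_def four_block_mat_def kron_id_def Let_def)
  then show ?thesis ..
qed

lemma orthonormal_representation_nc_le:
  fixes u :: "nat \<Rightarrow> nat \<Rightarrow> complex"
  assumes N: "fst G = N"
    and unit: "\<And>x. x < N \<Longrightarrow> (\<Sum>j<n. cnj (u x j) * u x j) = 1"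
    and orth: "\<And>x y. x < N \<Longrightarrow> y < N \<Longrightarrow> \<not> gsim G x y \<Longrightarrow> (\<Sum>j<n. cnj (u x j) * u y j) = 0"
  shows "nc_le (realize [(G, 1)]) (realize [(K1, n)])"
proof -
  define Es where "Es = map (\<lambda>x. ket_bra n N (u x) x) [0..<N]"
  have "map (\<lambda>E. mat_adjoint E * E) Es = map (\<lambda>x. ket_bra N N (\<lambda>k. of_bool (k = x)) x) [0..<N]"
    using unit by (simp add: Es_def mat_adjoint_ket_bra_mult) (auto intro!: eq_matI)
  then have sum_one: "mat_sum_list N (map (\<lambda>E. mat_adjoint E * E) Es) = 1\<^sub>m N"
    by (simp add: mat_sum_list_ket_bra_basis)
  have sandwich: "mat_adjoint E * X * E' \<in> arep_space [(G, 1)]"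
    if Es: "E \<in> set Es" "E' \<in> set Es" and X: "X \<in> arep_space [(K1, n)]" for E E' X
  proof -
    obtain x y where xy: "x < N" "y < N" "E = ket_bra n N (u x) x" "E' = ket_bra n N (u y) y"
      using Es by (auto simp: Es_def)
    obtain c where c: "X = c \<cdot>\<^sub>m 1\<^sub>m n" using arep_space_K1[OF X] by blast
    have E: "mat_adjoint E \<in> carrier_mat N n" "E' \<in> carrier_mat n N"
      using xy by (auto simp: ket_bra_def)
    have "mat_adjoint E * X = c \<cdot>\<^sub>m mat_adjoint E"
      using mult_smult_distrib[OF E(1) one_carrier_mat] right_mult_one_mat[OF E(1)] by (simp add: c)
    then have "mat_adjoint E * X * E' = c \<cdot>\<^sub>m (mat_adjoint E * E')"
      using E by (simp add: mult_smult_assoc_mat)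
    also have "\<dots> = (c * (\<Sum>j<n. cnj (u x j) * u y j)) \<cdot>\<^sub>m ket_bra N N (\<lambda>k. of_bool (k = x)) y"
      by (auto simp: xy mat_adjoint_ket_bra_mult intro!: eq_matI)
    also have "\<dots> \<in> graph_nc G"
      using orth[OF xy(1,2)] xy(1,2) N by (auto simp: graph_nc_def ket_bra_def)
    finally show ?thesis using graph_nc_subset_arep_space by blast
  qed
  have carrier: "\<forall>E\<in>set Es. E \<in> carrier_mat n N" by (auto simp: Es_def ket_bra_def)
  have realize: "realize [(G, 1)] = (N, arep_space [(G, 1)])"
    "realize [(K1, n)] = (n, arep_space [(K1, n)])"
    using N by (simp_all add: realize_def K1_def)
  show ?thesis
    unfolding nc_le_def realize prod.case using carrier sum_one sandwich by blast
qed

lemma nonorth_graph_nc_le: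
  assumes "0 < n"
  shows "nc_le (realize [(nonorth_graph n, 1)]) (realize [(K1, n)])"
proof (rule orthonormal_representation_nc_le)
  define u where "u x j = complex_of_real (of_int (sign_bit x j) / sqrt (real n))" for x j
  have "of_int a / sqrt (real n) * (of_int b / sqrt (real n)) = of_int (a * b) / real n"
    for a b :: int
    by (simp add: times_divide_times_eq real_sqrt_mult_self)
  then have "cnj (u x j) * u y j = of_real (of_int (sign_bit x j * sign_bit y j) / real n)" for x y j
    by (simp only: u_def complex_cnj_complex_of_real of_real_mult[symmetric])
  then have inner: "(\<Sum>j<n. cnj (u x j) * u y j) = of_real (of_int (sign_inner n x y) / real n)"
    for x y
    by (simp add: sign_inner_def sum_divide_distrib)
  show "(\<Sum>j<n. cnj (u x j) * u x j) = 1" for x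
    using assms by (simp add: inner)
  show "(\<Sum>j<n. cnj (u x j) * u y j) = 0"
    if "x < 2 ^ n" "y < 2 ^ n" "\<not> gsim (nonorth_graph n) x y" for x y
    using that by (auto simp: inner gsim_def nonorth_graph_def)
qed (simp add: nonorth_graph_def)

lemma f_alpha_nonorth_graph_le:
  assumes Delta: "Delta_A (f_alpha f \<alpha>)" and "0 < n"
  shows "f (nonorth_graph n) \<le> real n powr \<alpha>"
proof -
  have "f K1 = 1"
    using Delta by (simp add: Delta_A_def f_alpha_def arep_one_def)
  have "wf_arep [(nonorth_graph n, 1)]" "wf_arep [(K1, n)]"
    using wf_nonorth_graph \<open>0 < n\<close> by (simp_all add: wf_arep_def wf_graph_def K1_def)
  then have "f_alpha f \<alpha> [(nonorth_graph n, 1)] \<le> f_alpha f \<alpha> [(K1, n)]"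
    using Delta nonorth_graph_nc_le[OF \<open>0 < n\<close>] unfolding Delta_A_def by blast
  then show ?thesis using \<open>f K1 = 1\<close> by (simp add: f_alpha_def)
qed

theorem proposition3p6:
  shows "\<not> (\<exists>\<alpha>::real. 1 \<le> \<alpha> \<and> Delta_A (f_alpha frac_clique_cover \<alpha>))"
proof
  assume "\<exists>\<alpha>::real. 1 \<le> \<alpha> \<and> Delta_A (f_alpha frac_clique_cover \<alpha>)"
  then obtain \<alpha> :: real where Delta: "Delta_A (f_alpha frac_clique_cover \<alpha>)" by blast
  have "eventually (\<lambda>x::real. (4 * x) powr \<alpha> < 3 / 4 * (27 / 16) powr x) at_top"
    by real_asymp
  then obtain x0 where x0: "\<And>x. x0 \<le> x \<Longrightarrow> (4 * x) powr \<alpha> < 3 / 4 * (27 / 16) powr x"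
    by (auto simp: eventually_at_top_linorder)
  obtain p where p: "prime p" "max 3 (nat \<lceil>x0\<rceil>) < p" using bigger_prime by blast
  then have "x0 \<le> real p" by linarith
  have "real (4 * p) powr \<alpha> < 3 / 4 * (27 / 16) ^ p"
    using x0[OF \<open>x0 \<le> real p\<close>] by (simp add: powr_realpow)
  also have "\<dots> \<le> frac_clique_cover (nonorth_graph (4 * p))"
    using p by (intro frac_clique_cover_nonorth_graph_ge) auto
  also have "\<dots> \<le> real (4 * p) powr \<alpha>"
    using p by (intro f_alpha_nonorth_graph_le[OF Delta]) auto
  finally show False by simp
qed

end
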